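(* Let $c=\log(1/\epsilon)$, $C=[0,c]^m$, $C_{c/2}=[-c/2,3c/2]^m$, and define $$g'(x)=\begin{cases}g\big(\Pi_C(x)\big)\Big(1-\frac{2d_\infty(x,C)}{c}\Big),&x\in C_{c/2},\\0,&x\notin C_{c/2},\end{cases}$$ where $\Pi_C(x)$ is the Euclidean projection of $x$ onto $C$ and $d_\infty(x,C)=\inf_{y\in C}\|x-y\|_\infty$. Then $g'$ is bounded, Lipschitz, has compact support, and $g'(x)=g(x)$ for all $x\in C$. Furthermore, if $V'$ is the viscosity solution of $\partial_tV'+H(\nabla_xV')=0$ on $\mathbb R^m\times[0,1)$ with $V'(\cdot,1)=g'$, then $V'(x,t)=0$ for all $t\in[0,1]$ and all $x\notin[-3c/2,3c/2]^m$.
   Context: $\mathcal X$ finite, $\Delta_{\mathcal X}$ the distributions on $\mathcal X$, $\Delta_K$ the simplex on $[K]$, $D$ the KL divergence; $m\ge2$ bandits $\nu^1,\dots,\nu^m$, $\nu^i=(\nu^i_a)_{a\in[K]}$, with $\nu^i_a(x)\ge\epsilon$ for all $i,a,x$, $\epsilon\in(0,1)$. $H(p)=\min_{Q\in(\Delta_{\mathcal X})^K}\max_{w\in\Delta_K}\sum_{i=1}^m\sum_aw(a)D(Q_a\|\nu^i_a)p_i$; $g(x)=\max_{j\in[m]}\min_{i\ne j}x_i$. Viscosity solutions of such terminal-value problems are the values of the zero-sum differential game with dynamics $\dot x_i=\sum_aw(a)D(Q_a\|\nu^i_a)$, maximizer control $w\in\Delta_K$, minimizer control $Q\in(\Delta_{\mathcal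 X})^K$ and payoff equal to the terminal function at the final state. *)

theory Defs
  imports "HOL-Analysis.Analysis"
begin

definition prob_simplex :: "('a::finite \<Rightarrow> real) set" where
  "prob_simplex = {w. (\<forall>a. 0 \<le> w a) \<and> (\<Sum>a\<in>UNIV. w a) = 1}"

definition KL :: "('x::finite \<Rightarrow> real) \<Rightarrow> ('x \<Rightarrow> real) \<Rightarrow> real" where
  "KL q p = (\<Sum>x\<in>UNIV. if q x = 0 then 0 else q x * ln (q x / p x))"

definition Ham :: "('m::finite \<Rightarrow> 'k::finite \<Rightarrow> 'x::finite \<Rightarrow> real) \<Rightarrow> real^'m \<Rightarrow> real" where
  "Ham \<nu> p = (INF Q\<in>{Q :: 'k \<Rightarrow> 'x \<Rightarrow> real. \<forall>a. Q a \<in> prob_simplex}.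
                SUP w\<in>(prob_simplex :: ('k \<Rightarrow> real) set).
                  (\<Sum>i\<in>UNIV. \<Sum>a\<in>UNIV. w a * KL (Q a) (\<nu> i a) * p $ i))"

definition gfun :: "real^'m::finite \<Rightarrow> real" where
  "gfun x = Max (range (\<lambda>j. Min {x $ i | i. i \<noteq> j}))"

definition cube :: "real \<Rightarrow> real \<Rightarrow> (real^'m::finite) set" where
  "cube a b = {x. \<forall>i. a \<le> x $ i \<and> x $ i \<le> b}"

definition dinf :: "real^'m::finite \<Rightarrow> (real^'m) set \<Rightarrow> real" where
  "dinf x S = Inf ((\<lambda>y. infnorm (x - y)) ` S)"

definition gprime :: "real \<Rightarrow> real^'m::finite \<Rightarrow> real" where
  "gprime c x = (if x \<in> cube (-c/2) (3*c/2)
     then gfun (closest_point (cube 0 c) x) * (1 - 2 * dinf x (cube 0 c) / c)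
     else 0)"

definition C1_test :: "((real^'m::finite) \<times> real \<Rightarrow> real) \<Rightarrow> ((real^'m) \<times> real \<Rightarrow> real^'m)
    \<Rightarrow> ((real^'m) \<times> real \<Rightarrow> real) \<Rightarrow> bool" where
  "C1_test \<phi> Dx Dt \<longleftrightarrow>
     (\<forall>z. (\<phi> has_derivative (\<lambda>(h, s). Dx z \<bullet> h + Dt z * s)) (at z))
     \<and> continuous_on UNIV Dx \<and> continuous_on UNIV Dt"

text \<open>Sign convention for
  terminal-value problems: subsolution means phi_t + H(D phi) \<ge> 0 at local maxima
  of V - phi, supersolution means phi_t + H(D phi) \<le> 0 at local minima.\<close>
definition viscosity_solution ::
  "(real^'m::finite \<Rightarrow> real) \<Rightarrow> (real^'m \<Rightarrow> real \<Rightarrow> real) \<Rightarrow> (real^'m \<Rightarrow> real) \<Rightarrow> bool" where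
  "viscosity_solution H V G \<longleftrightarrow>
     continuous_on (UNIV \<times> {0..1}) (\<lambda>(x, t). V x t)
     \<and> (\<forall>x. V x 1 = G x)
     \<and> (\<forall>\<phi> Dx Dt x t. C1_test \<phi> Dx Dt \<and> t \<in> {0<..<1} \<and>
          (\<exists>r>0. \<forall>y s. s \<in> {0<..<1} \<and> dist (y, s) (x, t) < r \<longrightarrow>
               V y s - \<phi> (y, s) \<le> V x t - \<phi> (x, t))
          \<longrightarrow> Dt (x, t) + H (Dx (x, t)) \<ge> 0)
     \<and> (\<forall>\<phi> Dx Dt x t. C1_test \<phi> Dx Dt \<and> t \<in> {0<..<1} \<and>
          (\<exists>r>0. \<forall>y s. s \<in> {0<..<1} \<and> dist (y, s) (x, t) < r \<longrightarrow>
               V y s - \<phi> (y, s) \<ge> V x t - \<phi> (x, t))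
          \<longrightarrow> Dt (x, t) + H (Dx (x, t)) \<le> 0)"

end

theory Submission
  imports Defs
begin

text \<open>Writing \<open>\<Pi>\<^sub>C\<close> for the componentwise clamp to \<open>[0, c]\<close>, \<open>g'\<close> is the product of
  \<open>g \<circ> \<Pi>\<^sub>C\<close>, which is 1-Lipschitz with values in \<open>[0, c]\<close>, and the damping factor
  \<open>max 0 (1 - 2 d\<^sub>\<infinity>(x, C) / c)\<close>, which is \<open>2/c\<close>-Lipschitz with values in \<open>[0, 1]\<close>; hence \<open>g'\<close>
  is bounded, 3-Lipschitz and supported in \<open>C\<^sub>c\<^sub>/\<^sub>2\<close>.

  Since \<open>\<nu> \<ge> \<epsilon>\<close> forces \<open>0 \<le> D(Q\<^sub>a \<parallel> \<nu>\<^sup>i\<^sub>a) \<le> c\<close>, the Hamiltonian satisfies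
  \<open>-c \<Sum>\<^sub>i p\<^sub>i\<^sup>- \<le> H(p) \<le> c \<Sum>\<^sub>i p\<^sub>i\<^sup>+\<close>: along the game every coordinate is nondecreasing and moves at
  speed at most \<open>c\<close>. So \<open>V'(x, t)\<close> only sees terminal values at points \<open>y\<close> with
  \<open>x\<^sub>i \<le> y\<^sub>i \<le> x\<^sub>i + c\<close>, which all lie outside \<open>C\<^sub>c\<^sub>/\<^sub>2\<close> if some \<open>x\<^sub>i > 3c/2\<close> or \<open>x\<^sub>i < -3c/2\<close>.
  Analytically, a subsolution is compared with strict classical supersolutions built from the
  front \<open>K e\<^bsup>\<lambda>(a x\<^sub>i + b(1 - t) + e)\<^esup>\<close> with \<open>b \<ge> c max 0 a\<close>; letting \<open>\<lambda> \<rightarrow> \<infinity>\<close> shows that it is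
  \<open>\<le> 0\<close> on the half-space \<open>a x\<^sub>i + b(1 - t) + e < 0\<close> whenever its terminal values are \<open>\<le> 0\<close> on
  \<open>a x\<^sub>i + e < 0\<close>. This gives \<open>V' \<le> 0\<close>, and \<open>V' \<ge> 0\<close> follows by applying the same argument to
  \<open>-V'\<close>, a subsolution for \<open>p \<mapsto> -H(-p)\<close>.\<close>

section \<open>The modified terminal function\<close>

definition clamp_cube :: "real \<Rightarrow> real^'m::finite \<Rightarrow> real^'m" where
  "clamp_cube c x = (\<chi> i. max 0 (min c (x $ i)))"

lemma cube_eq_cbox: "cube a b = cbox (vec a) (vec b)"
  by (auto simp: cube_def mem_box_cart)

lemma clamp_cube_in_cube: "0 \<le> c \<Longrightarrow> clamp_cube c x \<in> cube 0 c"
  by (auto simp: cube_def clamp_cube_def)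

lemma clamp_cube_eq_self: "x \<in> cube 0 c \<Longrightarrow> clamp_cube c x = x"
  by (auto simp: clamp_cube_def cube_def vec_eq_iff)

lemma abs_diff_clamp_le:
  fixes c s y :: real
  shows "0 \<le> y \<Longrightarrow> y \<le> c \<Longrightarrow> \<bar>s - max 0 (min c s)\<bar> \<le> \<bar>s - y\<bar>"
  by (auto simp: max_def min_def)

lemma abs_diff_clamp_clamp_le:
  fixes c s t :: real
  shows "\<bar>max 0 (min c s) - max 0 (min c t)\<bar> \<le> \<bar>s - t\<bar>"
  by (auto simp: max_def min_def)

lemma abs_diff_clamp_residual_le:
  fixes c s t :: real
  shows "\<bar>(s - max 0 (min c s)) - (t - max 0 (min c t))\<bar> \<le> \<bar>s - t\<bar>"
  by (auto simp: max_def min_def)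

lemma infnorm_le_iff_cart: "infnorm (u::real^'n) \<le> r \<longleftrightarrow> (\<forall>i. \<bar>u $ i\<bar> \<le> r)"
proof
  assume "infnorm u \<le> r"
  then show "\<forall>i. \<bar>u $ i\<bar> \<le> r"
    using component_le_infnorm_cart order_trans by blast
next
  assume "\<forall>i. \<bar>u $ i\<bar> \<le> r"
  then have "Sup {\<bar>u $ i\<bar> |i. i \<in> UNIV} \<le> r"
    by (intro cSup_least) auto
  then show "infnorm u \<le> r"
    by (simp add: infnorm_cart)
qed

lemma closest_point_cube:
  assumes "0 \<le> c"
  shows "closest_point (cube 0 c) x = clamp_cube c x"
proof (rule closest_point_unique[symmetric])
  show "convex (cube 0 c :: (real^'m) set)" "closed (cube 0 c :: (real^'m) set)"
    by (simp_all add: cube_eq_cbox convex_box closed_cbox)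
  show "clamp_cube c x \<in> cube 0 c"
    using assms by (rule clamp_cube_in_cube)
  show "\<forall>y\<in>cube 0 c. dist x (clamp_cube c x) \<le> dist x y"
    unfolding dist_norm
    by (auto simp: clamp_cube_def cube_def intro!: norm_le_componentwise_cart abs_diff_clamp_le)
qed

lemma dinf_cube:
  assumes "0 \<le> c"
  shows "dinf x (cube 0 c) = infnorm (x - clamp_cube c x)"
  unfolding dinf_def
proof (rule cInf_eq_minimum)
  show "infnorm (x - clamp_cube c x) \<in> (\<lambda>y. infnorm (x - y)) ` cube 0 c"
    using clamp_cube_in_cube[OF assms] by blast
next
  fix d assume "d \<in> (\<lambda>y. infnorm (x - y)) ` cube 0 c"
  then obtain y where y: "y \<in> cube 0 c" and d: "d = infnorm (x - y)"
    by blast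
  have "\<bar>(x - clamp_cube c x) $ i\<bar> \<le> \<bar>(x - y) $ i\<bar>" for i
    using y by (simp add: clamp_cube_def cube_def abs_diff_clamp_le)
  then show "infnorm (x - clamp_cube c x) \<le> d"
    unfolding d infnorm_le_iff_cart by (meson component_le_infnorm_cart order_trans)
qed

lemma mem_cube_iff_infnorm_clamp:
  assumes "0 \<le> c" "0 \<le> r"
  shows "x \<in> cube (- r) (c + r) \<longleftrightarrow> infnorm (x - clamp_cube c x) \<le> r"
proof -
  have "(- r \<le> s \<and> s \<le> c + r) \<longleftrightarrow> \<bar>s - max 0 (min c s)\<bar> \<le> r" for s
    using assms by (auto simp: max_def min_def)
  then show ?thesis
    by (simp add: cube_def infnorm_le_iff_cart clamp_cube_def)
qed

lemma clamp_cube_lipschitz: "norm (clamp_cube c x - clamp_cube c y) \<le> norm (x - y)"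
  by (rule norm_le_componentwise_cart) (simp add: clamp_cube_def abs_diff_clamp_clamp_le)

lemma infnorm_diff_clamp_cube_lipschitz:
  "\<bar>infnorm (x - clamp_cube c x) - infnorm (y - clamp_cube c y)\<bar> \<le> norm (x - y)"
proof -
  have "\<bar>infnorm (x - clamp_cube c x) - infnorm (y - clamp_cube c y)\<bar>
      \<le> infnorm ((x - clamp_cube c x) - (y - clamp_cube c y))"
    by (rule absdiff_infnorm)
  also have "\<dots> \<le> norm ((x - clamp_cube c x) - (y - clamp_cube c y))"
    by (rule infnorm_le_norm)
  also have "\<dots> \<le> norm (x - y)"
    by (intro norm_le_componentwise_cart) (simp add: clamp_cube_def abs_diff_clamp_residual_le)
  finally show ?thesis .
qed

lemma exists_other_index:
  assumes "CARD('m::finite) \<ge> 2"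
  shows "\<exists>i. i \<noteq> (j::'m)"
proof (rule ccontr)
  assume "\<nexists>i. i \<noteq> j"
  then have "(UNIV :: 'm set) = {j}"
    by auto
  then have "CARD('m) = card {j}"
    by (simp only:)
  then show False
    using assms by simp
qed

lemma gfun_attained:
  obtains j where "gfun x = Min {x $ i |i. i \<noteq> j}"
proof -
  have "gfun x \<in> range (\<lambda>j. Min {x $ i |i. i \<noteq> j})"
    unfolding gfun_def by (rule Max_in) auto
  then show thesis
    using that by auto
qed

lemma gfun_in_components:
  assumes "CARD('m::finite) \<ge> 2"
  shows "\<exists>i. gfun (x::real^'m) = x $ i"
proof -
  obtain j where j: "gfun x = Min {x $ i |i. i \<noteq> j}"
    by (rule gfun_attained)
  have "Min {x $ i |i. i \<noteq> j} \<in> {x $ i |i. i \<noteq> j}"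
    using exists_other_index[OF assms, of j] by (intro Min_in) auto
  then show ?thesis
    using j by auto
qed

lemma gfun_le_add_norm:
  assumes "CARD('m::finite) \<ge> 2"
  shows "gfun (x::real^'m) \<le> gfun y + norm (x - y)"
proof -
  obtain j where j: "gfun x = Min {x $ i |i. i \<noteq> j}"
    by (rule gfun_attained)
  have "Min {y $ i |i. i \<noteq> j} \<in> {y $ i |i. i \<noteq> j}"
    using exists_other_index[OF assms, of j] by (intro Min_in) auto
  then obtain i where i: "i \<noteq> j" "Min {y $ i |i. i \<noteq> j} = y $ i"
    by auto
  have "gfun x \<le> x $ i"
    unfolding j using i by (intro Min_le) auto
  also have "\<dots> \<le> y $ i + norm (x - y)"
    using component_le_norm_cart[of "x - y" i] by simp
  also have "y $ i \<le> gfun y"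
    unfolding gfun_def i(2)[symmetric] by (rule Max_ge) auto
  finally show ?thesis
    by simp
qed

lemma gprime_eq_clamp:
  assumes "0 < c"
  shows "gprime c x = gfun (clamp_cube c x) * max 0 (1 - 2 * infnorm (x - clamp_cube c x) / c)"
proof -
  have "x \<in> cube (- c/2) (3*c/2) \<longleftrightarrow> infnorm (x - clamp_cube c x) \<le> c/2"
    using mem_cube_iff_infnorm_clamp[of c "c/2" x] assms by simp
  also have "\<dots> \<longleftrightarrow> 0 \<le> 1 - 2 * infnorm (x - clamp_cube c x) / c"
    using assms by (simp add: field_simps)
  finally show ?thesis
    using assms by (simp add: gprime_def closest_point_cube dinf_cube max_def)
qed

lemma gprime_eq_0_outside: "x \<notin> cube (- c / 2) (3 * c / 2) \<Longrightarrow> gprime c x = 0"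
  by (simp add: gprime_def)

lemma gprime_eq_gfun_on_cube: "0 < c \<Longrightarrow> x \<in> cube 0 c \<Longrightarrow> gprime c x = gfun x"
  by (simp add: gprime_eq_clamp clamp_cube_eq_self infnorm_0)

lemma gfun_clamp_cube_bounds:
  assumes "CARD('m::finite) \<ge> 2" "0 \<le> c"
  shows "0 \<le> gfun (clamp_cube c (x::real^'m)) \<and> gfun (clamp_cube c x) \<le> c"
proof -
  obtain i where "gfun (clamp_cube c x) = clamp_cube c x $ i"
    using gfun_in_components[OF assms(1)] by blast
  then show ?thesis
    using clamp_cube_in_cube[OF assms(2), of x] by (simp add: cube_def)
qed

lemma gprime_bounds:
  assumes "CARD('m::finite) \<ge> 2" "0 < c"
  shows "0 \<le> gprime c (x::real^'m) \<and> gprime c x \<le> c"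
proof -
  define h where "h = max 0 (1 - 2 * infnorm (x - clamp_cube c x) / c)"
  have "0 \<le> h" "h \<le> 1"
    using infnorm_pos_le[of "x - clamp_cube c x"] assms(2) by (auto simp: h_def)
  moreover have "0 \<le> gfun (clamp_cube c x)" "gfun (clamp_cube c x) \<le> c"
    using gfun_clamp_cube_bounds[OF assms(1), of c x] assms(2) by auto
  ultimately show ?thesis
    using mult_mono[of "gfun (clamp_cube c x)" c h 1] assms(2)
    by (simp add: gprime_eq_clamp h_def)
qed

lemma lipschitz_on_mult_real:
  fixes f g :: "'a::metric_space \<Rightarrow> real"
  assumes f: "A-lipschitz_on S f" and g: "B-lipschitz_on S g"
    and f_bound: "\<And>x. x \<in> S \<Longrightarrow> \<bar>f x\<bar> \<le> F" and g_bound: "\<And>x. x \<in> S \<Longrightarrow> \<bar>g x\<bar> \<le> G"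
    and "0 \<le> F" "0 \<le> G"
  shows "(F * B + G * A)-lipschitz_on S (\<lambda>x. f x * g x)"
proof (rule lipschitz_onI)
  fix x y assume x: "x \<in> S" and y: "y \<in> S"
  have "\<bar>f x * g x - f y * g y\<bar> = \<bar>f x * (g x - g y) + g y * (f x - f y)\<bar>"
    by (simp add: algebra_simps)
  also have "\<dots> \<le> \<bar>f x\<bar> * \<bar>g x - g y\<bar> + \<bar>g y\<bar> * \<bar>f x - f y\<bar>"
    by (metis abs_mult abs_triangle_ineq)
  also have "\<dots> \<le> F * (B * dist x y) + G * (A * dist x y)"
    using lipschitz_onD[OF f x y] lipschitz_onD[OF g x y] f_bound[OF x] g_bound[OF y] assms(5,6)
    by (intro add_mono mult_mono) (auto simp: dist_real_def)
  finally show "dist (f x * g x) (f y * g y) \<le> (F * B + G * A) * dist x y"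
    by (simp add: dist_real_def algebra_simps)
next
  show "0 \<le> F * B + G * A"
    using lipschitz_on_nonneg[OF f] lipschitz_on_nonneg[OF g] assms(5,6) by simp
qed

lemma gfun_clamp_cube_lipschitz:
  assumes "CARD('m::finite) \<ge> 2"
  shows "1-lipschitz_on UNIV (\<lambda>x::real^'m. gfun (clamp_cube c x))"
proof (rule lipschitz_onI)
  fix x y :: "real^'m"
  show "dist (gfun (clamp_cube c x)) (gfun (clamp_cube c y)) \<le> 1 * dist x y"
    using gfun_le_add_norm[OF assms, of "clamp_cube c x" "clamp_cube c y"]
      gfun_le_add_norm[OF assms, of "clamp_cube c y" "clamp_cube c x"]
      clamp_cube_lipschitz[of c x y] norm_minus_commute[of "clamp_cube c x"]
    by (simp add: dist_real_def dist_norm abs_le_iff)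
qed simp

lemma damping_lipschitz:
  assumes "0 < c"
  shows "(2 / c)-lipschitz_on UNIV (\<lambda>x::real^'m::finite. max 0 (1 - 2 * infnorm (x - clamp_cube c x) / c))"
proof (rule lipschitz_onI)
  fix x y :: "real^'m"
  have "dist (max 0 (1 - 2 * infnorm (x - clamp_cube c x) / c)) (max 0 (1 - 2 * infnorm (y - clamp_cube c y) / c))
      \<le> \<bar>(1 - 2 * infnorm (x - clamp_cube c x) / c) - (1 - 2 * infnorm (y - clamp_cube c y) / c)\<bar>"
    by (simp add: dist_real_def max_def)
  also have "\<dots> = 2 / c * \<bar>infnorm (x - clamp_cube c x) - infnorm (y - clamp_cube c y)\<bar>"
    using assms by (simp add: field_simps abs_mult_pos' abs_divide)
  also have "\<dots> \<le> 2 / c * dist x y"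
    using infnorm_diff_clamp_cube_lipschitz[of x c y] assms by (intro mult_left_mono) (auto simp: dist_norm)
  finally show "dist (max 0 (1 - 2 * infnorm (x - clamp_cube c x) / c)) (max 0 (1 - 2 * infnorm (y - clamp_cube c y) / c))
      \<le> 2 / c * dist x y" .
qed (use assms in simp)

lemma gprime_lipschitz:
  assumes "CARD('m::finite) \<ge> 2" "0 < c"
  shows "3-lipschitz_on UNIV (gprime c :: real^'m \<Rightarrow> real)"
proof -
  have "(c * (2 / c) + 1 * 1)-lipschitz_on UNIV
      (\<lambda>x::real^'m. gfun (clamp_cube c x) * max 0 (1 - 2 * infnorm (x - clamp_cube c x) / c))"
    using gfun_clamp_cube_bounds[OF assms(1)] infnorm_pos_le assms(2)
    by (intro lipschitz_on_mult_real gfun_clamp_cube_lipschitz[OF assms(1)] damping_lipschitz)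
      (auto simp: zero_le_divide_iff)
  then show ?thesis
    using assms(2) by (simp add: gprime_eq_clamp)
qed

section \<open>Bounds on the Hamiltonian\<close>

lemma prob_simplex_nonempty: "(prob_simplex :: ('k::finite \<Rightarrow> real) set) \<noteq> {}"
proof -
  have "(\<lambda>a. if a = undefined then 1 else 0) \<in> (prob_simplex :: ('k \<Rightarrow> real) set)"
    by (simp add: prob_simplex_def)
  then show ?thesis
    by blast
qed

lemma prob_simplex_le_1:
  assumes "q \<in> prob_simplex"
  shows "q x \<le> 1"
proof -
  have "q x \<le> (\<Sum>y\<in>UNIV. q y)"
    using assms by (intro member_le_sum) (auto simp: prob_simplex_def)
  then show ?thesis
    using assms by (simp add: prob_simplex_def)
qed

lemma KL_nonneg:
  assumes q: "q \<in> prob_simplex" and p: "p \<in> prob_simplex" and p_pos: "\<And>x. 0 < p x"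
  shows "0 \<le> KL q p"
proof -
  have term_ge: "q x - p x \<le> (if q x = 0 then 0 else q x * ln (q x / p x))" for x
  proof (cases "q x = 0")
    case True
    then show ?thesis
      using p_pos[of x] by simp
  next
    case False
    then have qx: "0 < q x"
      using q by (simp add: prob_simplex_def order.strict_iff_order)
    have "ln (p x / q x) \<le> p x / q x - 1"
      using qx p_pos[of x] by (intro ln_le_minus_one) simp
    then have "q x * (1 - p x / q x) \<le> q x * ln (q x / p x)"
      using qx p_pos[of x] by (intro mult_left_mono) (auto simp: ln_div)
    moreover have "q x * (1 - p x / q x) = q x - p x"
      using qx by (simp add: field_simps)
    ultimately show ?thesis
      using False by simp
  qed
  have "0 = (\<Sum>x\<in>UNIV. q x - p x)"
    using q p by (simp add: sum_subtractf prob_simplex_def)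
  also have "\<dots> \<le> KL q p"
    unfolding KL_def by (intro sum_mono term_ge)
  finally show ?thesis .
qed

lemma KL_le_ln_inverse:
  assumes q: "q \<in> prob_simplex" and \<epsilon>: "0 < \<epsilon>" and p_ge: "\<And>x. \<epsilon> \<le> p x"
  shows "KL q p \<le> ln (1 / \<epsilon>)"
proof -
  have term_le: "(if q x = 0 then 0 else q x * ln (q x / p x)) \<le> q x * ln (1 / \<epsilon>)" for x
  proof (cases "q x = 0")
    case False
    then have qx: "0 < q x"
      using q by (simp add: prob_simplex_def order.strict_iff_order)
    have "q x / p x \<le> 1 / \<epsilon>"
      using prob_simplex_le_1[OF q] \<epsilon> p_ge by (intro frac_le) auto
    then have "ln (q x / p x) \<le> ln (1 / \<epsilon>)"
      using qx \<epsilon> p_ge[of x] by simp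
    then show ?thesis
      using qx by simp
  qed simp
  have "KL q p \<le> (\<Sum>x\<in>UNIV. q x * ln (1 / \<epsilon>))"
    unfolding KL_def by (intro sum_mono term_le)
  also have "\<dots> = ln (1 / \<epsilon>)"
    using q by (simp add: sum_distrib_right[symmetric] prob_simplex_def)
  finally show ?thesis .
qed

lemma mult_between_pos_neg_part:
  fixes k c p :: real
  assumes "0 \<le> k" "k \<le> c"
  shows "- c * max 0 (- p) \<le> k * p \<and> k * p \<le> c * max 0 p"
  using assms mult_right_mono[of k c p] mult_right_mono[of k c "- p"]
    mult_nonneg_nonpos[of k p] mult_nonneg_nonneg[of k p]
  by (cases "0 \<le> p") auto

lemma weighted_sum_between:
  fixes p :: "real^'m::finite" and w :: "'k::finite \<Rightarrow> real"
  assumes w: "w \<in> prob_simplex" and k: "\<And>i a. 0 \<le> k i a" "\<And>i a. k i a \<le> c"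
  shows "- c * (\<Sum>i\<in>UNIV. max 0 (- p $ i)) \<le> (\<Sum>i\<in>UNIV. \<Sum>a\<in>UNIV. w a * k i a * p $ i)
    \<and> (\<Sum>i\<in>UNIV. \<Sum>a\<in>UNIV. w a * k i a * p $ i) \<le> c * (\<Sum>i\<in>UNIV. max 0 (p $ i))"
proof -
  have w_nonneg: "0 \<le> w a" and w_sum: "(\<Sum>a\<in>UNIV. w a) = 1" for a
    using w by (auto simp: prob_simplex_def)
  have average: "(\<Sum>a\<in>UNIV. w a * r) = r" for r
    by (simp add: sum_distrib_right[symmetric] w_sum)
  have "- c * max 0 (- p $ i) \<le> (\<Sum>a\<in>UNIV. w a * k i a * p $ i)
      \<and> (\<Sum>a\<in>UNIV. w a * k i a * p $ i) \<le> c * max 0 (p $ i)" for i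
  proof -
    have "w a * (- c * max 0 (- p $ i)) \<le> w a * (k i a * p $ i)
        \<and> w a * (k i a * p $ i) \<le> w a * (c * max 0 (p $ i))" for a
      using mult_between_pos_neg_part[OF k(1)[of i a] k(2)[of i a], of "p $ i"] w_nonneg[of a]
      by (simp only: mult_left_mono)
    then have "(\<Sum>a\<in>UNIV. w a * (- c * max 0 (- p $ i))) \<le> (\<Sum>a\<in>UNIV. w a * k i a * p $ i)
        \<and> (\<Sum>a\<in>UNIV. w a * k i a * p $ i) \<le> (\<Sum>a\<in>UNIV. w a * (c * max 0 (p $ i)))"
      by (auto simp: mult.assoc intro: sum_mono)
    then show ?thesis
      by (simp only: average)
  qed
  then show ?thesis
    by (auto simp: sum_distrib_left intro: sum_mono)
qed

lemma INF_SUP_between: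
  fixes f :: "'a \<Rightarrow> 'b \<Rightarrow> real"
  assumes A: "A \<noteq> {}" and B: "B \<noteq> {}"
    and f: "\<And>a b. a \<in> A \<Longrightarrow> b \<in> B \<Longrightarrow> L \<le> f a b \<and> f a b \<le> U"
  shows "L \<le> (INF a\<in>A. SUP b\<in>B. f a b) \<and> (INF a\<in>A. SUP b\<in>B. f a b) \<le> U"
proof -
  have SUP_between: "L \<le> (SUP b\<in>B. f a b) \<and> (SUP b\<in>B. f a b) \<le> U" if a: "a \<in> A" for a
  proof
    obtain b where b: "b \<in> B"
      using B by blast
    have "bdd_above (f a ` B)"
      using f a by (intro bdd_aboveI2[where M = U]) auto
    then show "L \<le> (SUP b\<in>B. f a b)"
      using f[OF a b] cSUP_upper[OF b] by (meson order_trans)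
    show "(SUP b\<in>B. f a b) \<le> U"
      using f a B by (intro cSUP_least) auto
  qed
  obtain a where a: "a \<in> A"
    using A by blast
  have "bdd_below ((\<lambda>a. SUP b\<in>B. f a b) ` A)"
    using SUP_between by (intro bdd_belowI2[where m = L]) auto
  then have "(INF a\<in>A. SUP b\<in>B. f a b) \<le> U"
    using SUP_between[OF a] cINF_lower[OF _ a] by (meson order_trans)
  moreover have "L \<le> (INF a\<in>A. SUP b\<in>B. f a b)"
    using SUP_between A by (intro cINF_greatest) auto
  ultimately show ?thesis
    by simp
qed

lemma Ham_between:
  fixes \<nu> :: "'m::finite \<Rightarrow> 'k::finite \<Rightarrow> 'x::finite \<Rightarrow> real"
  assumes \<epsilon>: "0 < \<epsilon>" and distr: "\<And>i a. \<nu> i a \<in> prob_simplex" and lower: "\<And>i a x. \<epsilon> \<le> \<nu> i a x"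
  shows "- ln (1 / \<epsilon>) * (\<Sum>i\<in>UNIV. max 0 (- p $ i)) \<le> Ham \<nu> p
    \<and> Ham \<nu> p \<le> ln (1 / \<epsilon>) * (\<Sum>i\<in>UNIV. max 0 (p $ i))"
  unfolding Ham_def
proof (rule INF_SUP_between[OF _ prob_simplex_nonempty])
  show "{Q :: 'k \<Rightarrow> 'x \<Rightarrow> real. \<forall>a. Q a \<in> prob_simplex} \<noteq> {}"
    using distr by blast
next
  fix Q :: "'k \<Rightarrow> 'x \<Rightarrow> real" and w :: "'k \<Rightarrow> real"
  assume "Q \<in> {Q. \<forall>a. Q a \<in> prob_simplex}" and w: "w \<in> prob_simplex"
  then have Q: "Q a \<in> prob_simplex" for a
    by simp
  have "0 < \<nu> i a x" for i a x
    using \<epsilon> lower[of i a x] by simp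
  then show "- ln (1 / \<epsilon>) * (\<Sum>i\<in>UNIV. max 0 (- p $ i))
        \<le> (\<Sum>i\<in>UNIV. \<Sum>a\<in>UNIV. w a * KL (Q a) (\<nu> i a) * p $ i)
      \<and> (\<Sum>i\<in>UNIV. \<Sum>a\<in>UNIV. w a * KL (Q a) (\<nu> i a) * p $ i)
        \<le> ln (1 / \<epsilon>) * (\<Sum>i\<in>UNIV. max 0 (p $ i))"
    using Q distr \<epsilon> lower
    by (intro weighted_sum_between[OF w] KL_nonneg KL_le_ln_inverse) auto
qed

section \<open>Viscosity subsolutions and comparison\<close>

definition viscosity_subsolution :: "(real^'m::finite \<Rightarrow> real) \<Rightarrow> (real^'m \<Rightarrow> real \<Rightarrow> real) \<Rightarrow> bool" where
  "viscosity_subsolution H W \<longleftrightarrow>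
     (\<forall>\<phi> Dx Dt x t. C1_test \<phi> Dx Dt \<and> t \<in> {0<..<1} \<and>
          (\<exists>r>0. \<forall>y s. s \<in> {0<..<1} \<and> dist (y, s) (x, t) < r \<longrightarrow>
               W y s - \<phi> (y, s) \<le> W x t - \<phi> (x, t))
          \<longrightarrow> Dt (x, t) + H (Dx (x, t)) \<ge> 0)"

definition viscosity_supersolution :: "(real^'m::finite \<Rightarrow> real) \<Rightarrow> (real^'m \<Rightarrow> real \<Rightarrow> real) \<Rightarrow> bool" where
  "viscosity_supersolution H W \<longleftrightarrow>
     (\<forall>\<phi> Dx Dt x t. C1_test \<phi> Dx Dt \<and> t \<in> {0<..<1} \<and>
          (\<exists>r>0. \<forall>y s. s \<in> {0<..<1} \<and> dist (y, s) (x, t) < r \<longrightarrow>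
               W y s - \<phi> (y, s) \<ge> W x t - \<phi> (x, t))
          \<longrightarrow> Dt (x, t) + H (Dx (x, t)) \<le> 0)"

lemma viscosity_solution_iff:
  "viscosity_solution H V G \<longleftrightarrow>
     continuous_on (UNIV \<times> {0..1}) (\<lambda>(x, t). V x t) \<and> (\<forall>x. V x 1 = G x)
     \<and> viscosity_subsolution H V \<and> viscosity_supersolution H V"
  by (simp add: viscosity_solution_def viscosity_subsolution_def viscosity_supersolution_def)

lemma C1_test_continuous_on: "C1_test \<phi> Dx Dt \<Longrightarrow> continuous_on A \<phi>"
  unfolding C1_test_def
  by (meson continuous_at_imp_continuous_on has_derivative_continuous)

lemma C1_test_uminus:
  assumes "C1_test \<phi> Dx Dt"
  shows "C1_test (\<lambda>z. - \<phi> z) (\<lambda>z. - Dx z) (\<lambda>z. - Dt z)"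
  unfolding C1_test_def
proof (intro conjI allI)
  fix z
  have "(\<phi> has_derivative (\<lambda>(h, s). Dx z \<bullet> h + Dt z * s)) (at z)"
    using assms unfolding C1_test_def by blast
  then show "((\<lambda>z. - \<phi> z) has_derivative (\<lambda>(h, s). - Dx z \<bullet> h + - Dt z * s)) (at z)"
    by (rule has_derivative_eq_rhs[OF has_derivative_minus]) (auto simp: fun_eq_iff)
  show "continuous_on UNIV (\<lambda>z. - Dx z)" "continuous_on UNIV (\<lambda>z. - Dt z)"
    using assms by (auto intro!: continuous_intros simp: C1_test_def)
qed

lemma viscosity_supersolution_uminus:
  assumes "viscosity_supersolution H V"
  shows "viscosity_subsolution (\<lambda>p. - H (- p)) (\<lambda>x t. - V x t)"
  unfolding viscosity_subsolution_def
proof (intro allI impI)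
  fix \<phi> Dx Dt x t
  assume "C1_test \<phi> Dx Dt \<and> t \<in> {0<..<1} \<and>
    (\<exists>r>0. \<forall>y s. s \<in> {0<..<1} \<and> dist (y, s) (x, t) < r \<longrightarrow>
       - V y s - \<phi> (y, s) \<le> - V x t - \<phi> (x, t))"
  then obtain r where \<phi>: "C1_test \<phi> Dx Dt" and t: "t \<in> {0<..<1}" and "r > 0"
    and r: "\<And>y s. s \<in> {0<..<1} \<Longrightarrow> dist (y, s) (x, t) < r \<Longrightarrow>
       - V y s - \<phi> (y, s) \<le> - V x t - \<phi> (x, t)"
    by blast
  have "\<forall>y s. s \<in> {0<..<1} \<and> dist (y, s) (x, t) < r \<longrightarrow>
      V y s - - \<phi> (y, s) \<ge> V x t - - \<phi> (x, t)"
    using r by fastforce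
  then have "C1_test (\<lambda>z. - \<phi> z) (\<lambda>z. - Dx z) (\<lambda>z. - Dt z) \<and> t \<in> {0<..<1} \<and>
    (\<exists>r>0. \<forall>y s. s \<in> {0<..<1} \<and> dist (y, s) (x, t) < r \<longrightarrow>
       V y s - - \<phi> (y, s) \<ge> V x t - - \<phi> (x, t))"
    using C1_test_uminus[OF \<phi>] t \<open>r > 0\<close> by blast
  then have "- Dt (x, t) + H (- Dx (x, t)) \<le> 0"
    using assms unfolding viscosity_supersolution_def by blast
  then show "Dt (x, t) + - H (- Dx (x, t)) \<ge> 0"
    by simp
qed

lemma subsolution_le_strict_supersolution:
  fixes W :: "real^'m::finite \<Rightarrow> real \<Rightarrow> real"
  assumes cont: "continuous_on (UNIV \<times> {0..1}) (\<lambda>(x, t). W x t)"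
    and sub: "viscosity_subsolution H W"
    and \<phi>: "C1_test \<phi> Dx Dt"
    and strict: "\<And>z. snd z \<in> {0<..<1} \<Longrightarrow> Dt z + H (Dx z) < 0"
    and terminal: "\<And>y. W y 1 \<le> \<phi> (y, 1)"
    and S: "compact S" "S \<subseteq> UNIV \<times> {0<..1}"
    and outside: "\<And>y s. s \<in> {0<..1} \<Longrightarrow> (y, s) \<notin> S \<Longrightarrow> W y s \<le> \<phi> (y, s)"
    and t: "t \<in> {0<..1}"
  shows "W x t \<le> \<phi> (x, t)"
proof (rule ccontr)
  assume above: "\<not> W x t \<le> \<phi> (x, t)"
  define f where "f z = W (fst z) (snd z) - \<phi> z" for z
  have "(x, t) \<in> S"
    using outside t above by blast
  moreover have "continuous_on S f"
  proof -
    have "S \<subseteq> UNIV \<times> {0..1}"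
      using S(2) by auto
    then have "continuous_on S (\<lambda>z. W (fst z) (snd z))"
      using continuous_on_subset[OF cont] by (simp add: case_prod_unfold)
    then show ?thesis
      unfolding f_def using C1_test_continuous_on[OF \<phi>] by (intro continuous_intros)
  qed
  ultimately obtain xs ts where max_in_S: "(xs, ts) \<in> S" and is_max: "\<And>z. z \<in> S \<Longrightarrow> f z \<le> f (xs, ts)"
    using continuous_attains_sup[OF S(1)] by (metis empty_iff surj_pair)
  have pos: "0 < f (xs, ts)"
    using is_max[OF \<open>(x, t) \<in> S\<close>] above by (simp add: f_def)
  have "ts \<noteq> 1"
    using pos terminal[of xs] by (auto simp: f_def)
  then have ts: "ts \<in> {0<..<1}"
    using max_in_S S(2) by auto
  have "W y s - \<phi> (y, s) \<le> W xs ts - \<phi> (xs, ts)" if "s \<in> {0<..<1}" for y s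
  proof (cases "(y, s) \<in> S")
    case True
    then show ?thesis
      using is_max by (fastforce simp: f_def)
  next
    case False
    then show ?thesis
      using outside[of s y] that pos by (simp add: f_def)
  qed
  then have "\<exists>r>0. \<forall>y s. s \<in> {0<..<1} \<and> dist (y, s) (xs, ts) < r \<longrightarrow>
      W y s - \<phi> (y, s) \<le> W xs ts - \<phi> (xs, ts)"
    by (intro exI[of _ 1]) auto
  then have "Dt (xs, ts) + H (Dx (xs, ts)) \<ge> 0"
    using sub \<phi> ts unfolding viscosity_subsolution_def by blast
  then show False
    using strict[of "(xs, ts)"] ts by simp
qed

section \<open>Barriers and finite speed of propagation\<close>

text \<open>The first term is the front, which tends to \<open>0\<close> as \<open>\<lambda> \<rightarrow> \<infinity>\<close> where
  \<open>a x\<^sub>i + b(1 - t) + e < 0\<close>. Of the corrections, \<open>\<delta> \<surd>(1 + |x|\<^sup>2)\<close> confines the maximum of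
  \<open>W - barrier\<close> to a ball, \<open>M e\<^bsup>\<lambda>(\<tau>/2 - t)\<^esup>\<close> keeps it away from times below \<open>\<tau>/2\<close>, and
  \<open>L (1 - t)\<close> makes the barrier a strict supersolution.\<close>

definition barrier ::
  "real \<Rightarrow> real \<Rightarrow> real \<Rightarrow> real \<Rightarrow> real \<Rightarrow> real \<Rightarrow> real \<Rightarrow> real \<Rightarrow> real \<Rightarrow> 'm::finite \<Rightarrow> (real^'m) \<times> real \<Rightarrow> real"
  where
  "barrier K lam a b e \<delta> \<tau> M L i z =
     K * exp (lam * (a * fst z $ i + b * (1 - snd z) + e)) + \<delta> * sqrt (1 + fst z \<bullet> fst z)
     + M * exp (lam * (\<tau> / 2 - snd z)) + L * (1 - snd z)"

definition barrier_Dx ::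
  "real \<Rightarrow> real \<Rightarrow> real \<Rightarrow> real \<Rightarrow> real \<Rightarrow> real \<Rightarrow> 'm::finite \<Rightarrow> (real^'m) \<times> real \<Rightarrow> real^'m" where
  "barrier_Dx K lam a b e \<delta> i z =
     (K * exp (lam * (a * fst z $ i + b * (1 - snd z) + e)) * lam * a) *\<^sub>R axis i 1
     + (\<delta> / sqrt (1 + fst z \<bullet> fst z)) *\<^sub>R fst z"

definition barrier_Dt ::
  "real \<Rightarrow> real \<Rightarrow> real \<Rightarrow> real \<Rightarrow> real \<Rightarrow> real \<Rightarrow> real \<Rightarrow> real \<Rightarrow> 'm::finite \<Rightarrow> (real^'m) \<times> real \<Rightarrow> real" where
  "barrier_Dt K lam a b e \<tau> M L i z =
     - (K * exp (lam * (a * fst z $ i + b * (1 - snd z) + e)) * lam * b)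
     - M * exp (lam * (\<tau> / 2 - snd z)) * lam - L"

lemma barrier_C1_test:
  fixes i :: "'m::finite"
  shows "C1_test (barrier K lam a b e \<delta> \<tau> M L i) (barrier_Dx K lam a b e \<delta> i) (barrier_Dt K lam a b e \<tau> M L i)"
  unfolding C1_test_def
proof (intro conjI allI)
  fix z :: "(real^'m) \<times> real"
  have pos: "0 < 1 + fst z \<bullet> fst z"
    by (simp add: add_pos_nonneg)
  show "(barrier K lam a b e \<delta> \<tau> M L i has_derivative
      (\<lambda>(h, s). barrier_Dx K lam a b e \<delta> i z \<bullet> h + barrier_Dt K lam a b e \<tau> M L i z * s)) (at z)"
    unfolding barrier_def[abs_def]
    by (rule has_derivative_eq_rhs,
        (rule derivative_eq_intros bounded_linear.has_derivative[OF bounded_linear_vec_nth] refl pos)+)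
      (auto simp: fun_eq_iff barrier_Dx_def barrier_Dt_def inner_add_left inner_axis inner_commute
        algebra_simps; simp add: divide_inverse)
next
  have "0 < sqrt (1 + fst z \<bullet> fst z)" for z :: "(real^'m) \<times> real"
    by (simp add: add_pos_nonneg)
  then show "continuous_on UNIV (barrier_Dx K lam a b e \<delta> i :: _ \<Rightarrow> real^'m)"
    unfolding barrier_Dx_def by (intro continuous_intros) (metis less_irrefl)
  show "continuous_on UNIV (barrier_Dt K lam a b e \<tau> M L i :: _ \<Rightarrow> real)"
    unfolding barrier_Dt_def by (intro continuous_intros)
qed

lemma barrier_strict_supersolution:
  fixes i :: "'m::finite" and H :: "real^'m \<Rightarrow> real"
  assumes H: "\<And>p. H p \<le> c * (\<Sum>j\<in>UNIV. max 0 (p $ j))"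
    and c: "0 \<le> c" and K: "0 \<le> K" and lam: "0 \<le> lam" and b: "c * max 0 a \<le> b"
    and \<delta>: "0 < \<delta>" and M: "0 \<le> M" and L: "c * CARD('m) * \<delta> < L"
  shows "barrier_Dt K lam a b e \<tau> M L i z + H (barrier_Dx K lam a b e \<delta> i z) < 0"
proof -
  define F where "F = K * exp (lam * (a * fst z $ i + b * (1 - snd z) + e)) * lam"
  define R where "R = sqrt (1 + fst z \<bullet> fst z)"
  have F: "0 \<le> F"
    using K lam by (simp add: F_def)
  have R: "0 < R"
    by (simp add: R_def add_pos_nonneg)
  have component: "max 0 (barrier_Dx K lam a b e \<delta> i z $ j) \<le> (if j = i then F * max 0 a else 0) + \<delta>" for j
  proof -
    have "fst z $ j \<le> norm (fst z)"
      using component_le_norm_cart[of "fst z" j] by simp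
    also have "\<dots> \<le> R"
      by (simp add: R_def norm_eq_sqrt_inner)
    finally have "\<delta> * fst z $ j \<le> \<delta> * R"
      using \<delta> by simp
    then have "\<delta> / R * fst z $ j \<le> \<delta>"
      using R by (simp add: field_simps)
    moreover have "F * a \<le> F * max 0 a"
      using F by (intro mult_left_mono) auto
    moreover have "barrier_Dx K lam a b e \<delta> i z $ j = (if j = i then F * a else 0) + \<delta> / R * fst z $ j"
      by (simp add: barrier_Dx_def F_def R_def axis_def)
    ultimately show ?thesis
      using F \<delta> by (cases "j = i") simp_all
  qed
  have "(\<Sum>j\<in>UNIV. max 0 (barrier_Dx K lam a b e \<delta> i z $ j))
      \<le> (\<Sum>j\<in>UNIV. (if j = i then F * max 0 a else 0) + \<delta>)"
    by (intro sum_mono component)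
  then have "H (barrier_Dx K lam a b e \<delta> i z) \<le> c * (\<Sum>j\<in>UNIV. (if j = i then F * max 0 a else 0) + \<delta>)"
    using H[of "barrier_Dx K lam a b e \<delta> i z"] mult_left_mono[OF _ c] by (meson order_trans)
  also have "\<dots> = c * max 0 a * F + c * CARD('m) * \<delta>"
    by (simp add: sum.distrib algebra_simps)
  also have "\<dots> \<le> b * F + c * CARD('m) * \<delta>"
    using b F by (simp add: mult_right_mono)
  finally have "H (barrier_Dx K lam a b e \<delta> i z) \<le> b * F + c * CARD('m) * \<delta>" .
  moreover have "barrier_Dt K lam a b e \<tau> M L i z \<le> - (F * b) - L"
    using M lam by (simp add: barrier_Dt_def F_def)
  ultimately show ?thesis
    using L by (simp add: algebra_simps)
qed

lemma barrier_ge_outside: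
  assumes K: "0 \<le> K" and lam: "0 \<le> lam" and \<delta>: "0 < \<delta>" and M: "0 \<le> M" and L: "0 \<le> L"
    and s: "s \<le> 1" and outside: "s < \<tau> / 2 \<or> M / \<delta> < norm y"
  shows "M \<le> barrier K lam a b e \<delta> \<tau> M L i (y, s)"
proof -
  have "0 \<le> K * exp (lam * (a * y $ i + b * (1 - s) + e))" "0 \<le> L * (1 - s)"
    "0 \<le> \<delta> * sqrt (1 + y \<bullet> y)" "0 \<le> M * exp (lam * (\<tau> / 2 - s))"
    using K L s \<delta> M by simp_all
  moreover have "M \<le> \<delta> * sqrt (1 + y \<bullet> y) \<or> M \<le> M * exp (lam * (\<tau> / 2 - s))"
    using outside
  proof
    assume "s < \<tau> / 2"
    then show ?thesis
      using M lam by (simp add: mult_le_cancel_left1)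
  next
    assume "M / \<delta> < norm y"
    then have "M < \<delta> * norm y"
      using \<delta> by (simp add: field_simps)
    also have "\<dots> \<le> \<delta> * sqrt (1 + y \<bullet> y)"
      using \<delta> by (simp add: norm_eq_sqrt_inner)
    finally show ?thesis
      by simp
  qed
  ultimately show ?thesis
    by (auto simp: barrier_def)
qed

lemma barrier_terminal_ge:
  assumes "0 \<le> \<delta>" "0 \<le> M"
  shows "K * exp (lam * (a * y $ i + e)) \<le> barrier K lam a b e \<delta> \<tau> M L i (y, 1)"
  using assms by (simp add: barrier_def)

lemma subsolution_le_barrier:
  fixes W :: "real^'m::finite \<Rightarrow> real \<Rightarrow> real" and i :: 'm
  assumes cont: "continuous_on (UNIV \<times> {0..1}) (\<lambda>(x, t). W x t)"
    and sub: "viscosity_subsolution H W"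
    and W_le: "\<And>x t. t \<in> {0..1} \<Longrightarrow> W x t \<le> M"
    and H: "\<And>p. H p \<le> c * (\<Sum>j\<in>UNIV. max 0 (p $ j))"
    and c: "0 \<le> c" and K: "0 \<le> K" and lam: "0 \<le> lam" and b: "c * max 0 a \<le> b"
    and \<delta>: "0 < \<delta>" and M: "0 \<le> M" and L: "c * CARD('m) * \<delta> < L" and \<tau>: "0 < \<tau>"
    and terminal: "\<And>y. W y 1 \<le> K * exp (lam * (a * y $ i + e))"
    and t: "t \<in> {0<..1}"
  shows "W x t \<le> barrier K lam a b e \<delta> \<tau> M L i (x, t)"
proof (rule subsolution_le_strict_supersolution[OF cont sub barrier_C1_test _ _ _ _ _ t])
  show "barrier_Dt K lam a b e \<tau> M L i z + H (barrier_Dx K lam a b e \<delta> i z) < 0" for z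
    by (rule barrier_strict_supersolution[OF H c K lam b \<delta> M L])
  show "W y 1 \<le> barrier K lam a b e \<delta> \<tau> M L i (y, 1)" for y
    using terminal[of y] barrier_terminal_ge[of \<delta> M K lam a y i e b \<tau> L] \<delta> M by simp
  show "compact (cball (0::real^'m) (M / \<delta>) \<times> {\<tau> / 2..1})"
    by (intro compact_Times compact_cball compact_Icc)
  show "cball 0 (M / \<delta>) \<times> {\<tau> / 2..1} \<subseteq> UNIV \<times> {0<..1}"
    using \<tau> by auto
  fix y s
  assume s: "s \<in> {0<..1}" and "(y, s) \<notin> cball (0::real^'m) (M / \<delta>) \<times> {\<tau> / 2..1}"
  then have "s < \<tau> / 2 \<or> M / \<delta> < norm y"
    by (auto simp: not_le)
  moreover have "0 \<le> c * CARD('m) * \<delta>"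
    using c \<delta> by simp
  then have "0 \<le> L"
    using L by linarith
  ultimately have "M \<le> barrier K lam a b e \<delta> \<tau> M L i (y, s)"
    using s by (intro barrier_ge_outside[OF K lam \<delta> M]) auto
  then show "W y s \<le> barrier K lam a b e \<delta> \<tau> M L i (y, s)"
    using W_le[of s y] s by simp
qed

lemma barrier_tendsto_0:
  assumes front: "a * x $ i + b * (1 - t) + e < 0" and t: "0 < t"
  shows "(\<lambda>n. barrier K (real n) a b e (inverse (real (Suc n))) t M (C * inverse (real (Suc n))) i (x, t))
    \<longlonglongrightarrow> 0"
proof -
  define u where "u = a * x $ i + b * (1 - t) + e"
  define A where "A = sqrt (1 + x \<bullet> x) + C * (1 - t)"
  have "barrier K (real n) a b e (inverse (real (Suc n))) t M (C * inverse (real (Suc n))) i (x, t)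
      = K * exp u ^ n + A * inverse (real (Suc n)) + M * exp (- t / 2) ^ n" for n
    by (simp add: barrier_def u_def A_def exp_of_nat_mult[symmetric] algebra_simps)
  moreover have "(\<lambda>n. K * exp u ^ n + A * inverse (real (Suc n)) + M * exp (- t / 2) ^ n)
      \<longlonglongrightarrow> K * 0 + A * 0 + M * 0"
    using front t unfolding u_def
    by (intro tendsto_intros LIMSEQ_power_zero LIMSEQ_inverse_real_of_nat) simp_all
  ultimately show ?thesis
    by simp
qed

lemma subsolution_nonpos_on_halfspace:
  fixes W :: "real^'m::finite \<Rightarrow> real \<Rightarrow> real" and i :: 'm
  assumes cont: "continuous_on (UNIV \<times> {0..1}) (\<lambda>(x, t). W x t)"
    and sub: "viscosity_subsolution H W"
    and W_le: "\<And>x t. t \<in> {0..1} \<Longrightarrow> W x t \<le> M" and M: "0 \<le> M"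
    and H: "\<And>p. H p \<le> c * (\<Sum>j\<in>UNIV. max 0 (p $ j))"
    and c: "0 \<le> c" and K: "0 \<le> K" and b: "c * max 0 a \<le> b"
    and terminal_le: "\<And>y. W y 1 \<le> K"
    and terminal_nonpos: "\<And>y. a * y $ i + e < 0 \<Longrightarrow> W y 1 \<le> 0"
    and front: "a * x $ i + b * (1 - t) + e < 0" and t: "t \<in> {0<..1}"
  shows "W x t \<le> 0"
proof (rule LIMSEQ_le_const[OF barrier_tendsto_0[OF front]])
  define C where "C = c * CARD('m) + 1"
  show "0 < t"
    using t by simp
  show "\<exists>N. \<forall>n\<ge>N. W x t \<le> barrier K (real n) a b e (inverse (real (Suc n))) t M
      (C * inverse (real (Suc n))) i (x, t)"
  proof (intro exI allI impI)
    fix n :: nat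
    have "W y 1 \<le> K * exp (real n * (a * y $ i + e))" for y
    proof (cases "a * y $ i + e < 0")
      case True
      then show ?thesis
        using terminal_nonpos[of y] K by (meson exp_ge_zero mult_nonneg_nonneg order_trans)
    next
      case False
      then have "K \<le> K * exp (real n * (a * y $ i + e))"
        using K by (simp add: mult_le_cancel_left1)
      then show ?thesis
        using terminal_le[of y] by simp
    qed
    moreover have "c * CARD('m) * inverse (real (Suc n)) < C * inverse (real (Suc n))"
      by (simp add: C_def)
    ultimately show "W x t \<le> barrier K (real n) a b e (inverse (real (Suc n))) t M
      (C * inverse (real (Suc n))) i (x, t)"
      using t by (intro subsolution_le_barrier[OF cont sub W_le H c K _ b _ M]) auto
  qed
qed

lemma nonpos_at_time_0:
  fixes W :: "'a::topological_space \<Rightarrow> real \<Rightarrow> real"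
  assumes cont: "continuous_on (UNIV \<times> {0..1}) (\<lambda>(x, t). W x t)"
    and pos: "\<And>t. t \<in> {0<..1} \<Longrightarrow> W x t \<le> 0" and t: "t \<in> {0..1}"
  shows "W x t \<le> 0"
proof (rule continuous_le_on_closure[of "{0<..1}" "W x"])
  have "continuous_on {0..1} (\<lambda>t. (x, t))"
    by (intro continuous_intros)
  then show "continuous_on (closure {0<..1}) (W x)"
    using continuous_on_compose2[OF cont, of "{0..1}" "\<lambda>t. (x, t)"] by auto
qed (use pos t in auto)

lemma subsolution_nonpos_outside_cube:
  fixes W :: "real^'m::finite \<Rightarrow> real \<Rightarrow> real"
  assumes cont: "continuous_on (UNIV \<times> {0..1}) (\<lambda>(x, t). W x t)"
    and sub: "viscosity_subsolution H W"
    and W_le: "\<And>x t. t \<in> {0..1} \<Longrightarrow> W x t \<le> M" and M: "0 \<le> M"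
    and H: "\<And>p. H p \<le> c * (\<Sum>j\<in>UNIV. max 0 (p $ j))"
    and c: "0 \<le> c" and K: "0 \<le> K"
    and terminal_le: "\<And>y. W y 1 \<le> K"
    and terminal_outside: "\<And>y. y \<notin> cube lo hi \<Longrightarrow> W y 1 \<le> 0"
    and x: "x \<notin> cube (lo - c) hi" and t: "t \<in> {0<..1}"
  shows "W x t \<le> 0"
proof -
  note halfspace = subsolution_nonpos_on_halfspace[OF cont sub W_le M H c K _ terminal_le _ _ t]
  have outside_if: "W y 1 \<le> 0" if "y $ i < lo \<or> hi < y $ i" for y i
  proof (rule terminal_outside)
    show "y \<notin> cube lo hi"
      using that by (auto simp: cube_def not_le)
  qed
  obtain i where "x $ i < lo - c \<or> hi < x $ i"
    using x by (auto simp: cube_def not_le)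
  then show ?thesis
  proof
    assume x_i: "x $ i < lo - c"
    \<comment> \<open>At times \<open>s \<in> [t, 1]\<close> the front \<open>y\<^sub>i = (x\<^sub>i + c + lo)/2 - c(1 - s)\<close> lies strictly between \<open>x\<^sub>i\<close> and \<open>lo\<close>.\<close>
    have "c * (1 - t) \<le> c"
      using c t by (simp add: mult_left_le)
    then have "1 * x $ i + c * (1 - t) + - (x $ i + c + lo) / 2 < 0"
      using x_i by (simp add: field_simps)
    moreover have "W y 1 \<le> 0" if "1 * y $ i + - (x $ i + c + lo) / 2 < 0" for y
      using that x_i c by (intro outside_if[of y i] disjI1) (simp add: field_simps)
    ultimately show ?thesis
      using c by (intro halfspace[where a = 1 and b = c and e = "- (x $ i + c + lo) / 2" and i = i]) auto
  next
    assume x_i: "hi < x $ i"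
    then have "- 1 * x $ i + 0 * (1 - t) + (hi + x $ i) / 2 < 0"
      by simp
    moreover have "W y 1 \<le> 0" if "- 1 * y $ i + (hi + x $ i) / 2 < 0" for y
      using that x_i by (intro outside_if[of y i] disjI2) (simp add: field_simps)
    ultimately show ?thesis
      by (intro halfspace[where a = "- 1" and b = 0 and e = "(hi + x $ i) / 2" and i = i]) auto
  qed
qed

lemma viscosity_solution_vanishes_outside_cube:
  fixes V :: "real^'m::finite \<Rightarrow> real \<Rightarrow> real"
  assumes H_le: "\<And>p. H p \<le> c * (\<Sum>j\<in>UNIV. max 0 (p $ j))"
    and H_ge: "\<And>p. - c * (\<Sum>j\<in>UNIV. max 0 (- p $ j)) \<le> H p"
    and c: "0 \<le> c"
    and V: "viscosity_solution H V G"
    and bounded: "bounded ((\<lambda>(x, t). V x t) ` (UNIV \<times> {0..1}))"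
    and G: "\<And>y. 0 \<le> G y \<and> G y \<le> K"
    and G_outside: "\<And>y. y \<notin> cube lo hi \<Longrightarrow> G y = 0"
    and x: "x \<notin> cube (lo - c) hi" and t: "t \<in> {0..1}"
  shows "V x t = 0"
proof -
  have cont: "continuous_on (UNIV \<times> {0..1}) (\<lambda>(x, t). V x t)" and terminal: "\<And>y. V y 1 = G y"
    and sub: "viscosity_subsolution H V" and super: "viscosity_supersolution H V"
    using V by (simp_all add: viscosity_solution_iff)
  have neg_cont: "continuous_on (UNIV \<times> {0..1}) (\<lambda>(x, t). - V x t)"
    using continuous_on_minus[OF cont] by (simp add: case_prod_unfold)
  obtain M where M: "0 < M" and V_bound: "\<And>y s. s \<in> {0..1} \<Longrightarrow> \<bar>V y s\<bar> \<le> M"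
    using bounded unfolding bounded_pos by force
  have V_le: "V y s \<le> M" and neg_V_le: "- V y s \<le> M" if "s \<in> {0..1}" for y s
    using V_bound[OF that, of y] by linarith+
  have "0 \<le> K"
    using G order_trans by blast
  then have "V x s \<le> 0" if "s \<in> {0<..1}" for s
    using V_le M G G_outside terminal
    by (intro subsolution_nonpos_outside_cube[where M = M, OF cont sub _ _ H_le c _ _ _ x that]) auto
  moreover have "- V x s \<le> 0" if s: "s \<in> {0<..1}" for s
  proof -
    have H_neg: "- H (- p) \<le> c * (\<Sum>j\<in>UNIV. max 0 (p $ j))" for p
      using H_ge[of "- p"] by simp
    show ?thesis
      by (rule subsolution_nonpos_on_halfspace[where K = 0 and a = 0 and b = 0 and e = "- 1",
            OF neg_cont viscosity_supersolution_uminus[OF super] neg_V_le _ H_neg c _ _ _ _ _ s])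
        (use M G terminal in auto)
  qed
  ultimately show ?thesis
    using nonpos_at_time_0[OF cont, of x] nonpos_at_time_0[OF neg_cont, of x] t by force
qed

theorem mainTheorem8:
  fixes \<nu> :: "'m::finite \<Rightarrow> 'k::finite \<Rightarrow> 'x::finite \<Rightarrow> real"
    and \<epsilon> c :: real
  assumes m2: "CARD('m) \<ge> 2"
    and eps: "0 < \<epsilon>" "\<epsilon> < 1"
    and distr: "\<And>i a. \<nu> i a \<in> prob_simplex"
    and lower: "\<And>i a x. \<nu> i a x \<ge> \<epsilon>"
    and c_def: "c = ln (1 / \<epsilon>)"
  shows "bounded (range (gprime c :: real^'m \<Rightarrow> real))
      \<and> (\<exists>L. L-lipschitz_on UNIV (gprime c :: real^'m \<Rightarrow> real))
      \<and> compact (closure {x :: real^'m. gprime c x \<noteq> 0})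
      \<and> (\<forall>x :: real^'m. x \<in> cube 0 c \<longrightarrow> gprime c x = gfun x)
      \<and> (\<forall>V. viscosity_solution (Ham \<nu>) V (gprime c)
             \<and> bounded ((\<lambda>(x, t). V x t) ` (UNIV \<times> {0..1}))
             \<and> uniformly_continuous_on (UNIV \<times> {0..1}) (\<lambda>(x, t). V x t)
           \<longrightarrow> (\<forall>x t. t \<in> {0..1} \<and> x \<notin> cube (-3*c/2) (3*c/2) \<longrightarrow> V x t = 0))"
proof -
  have c: "0 < c"
    using eps by (simp add: c_def)
  have Ham: "- c * (\<Sum>j\<in>UNIV. max 0 (- p $ j)) \<le> Ham \<nu> p \<and> Ham \<nu> p \<le> c * (\<Sum>j\<in>UNIV. max 0 (p $ j))" for p
    using Ham_between[OF eps(1) distr lower] by (simp add: c_def)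
  have "bounded (range (gprime c :: real^'m \<Rightarrow> real))"
    unfolding bounded_real using gprime_bounds[OF m2 c] by (metis abs_of_nonneg rangeE)
  moreover have "{x :: real^'m. gprime c x \<noteq> 0} \<subseteq> cube (- c / 2) (3 * c / 2)"
    using gprime_eq_0_outside by blast
  then have "compact (closure {x :: real^'m. gprime c x \<noteq> 0})"
    unfolding compact_closure cube_eq_cbox by (rule bounded_subset[OF bounded_cbox])
  moreover have "V x t = 0"
    if V: "viscosity_solution (Ham \<nu>) V (gprime c)" "bounded ((\<lambda>(x, t). V x t) ` (UNIV \<times> {0..1}))"
      and x: "x \<notin> cube (-3*c/2) (3*c/2)" and t: "t \<in> {0..1}" for V x t
  proof (rule viscosity_solution_vanishes_outside_cube[where lo = "- c / 2" and hi = "3 * c / 2" and K = c,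
        OF _ _ _ V _ _ _ t])
    show "x \<notin> cube (- c / 2 - c) (3 * c / 2)"
      using x unfolding cube_def by auto
  qed (use Ham gprime_bounds[OF m2 c] gprime_eq_0_outside c in simp_all)
  ultimately show ?thesis
    using gprime_lipschitz[OF m2 c] gprime_eq_gfun_on_cube[OF c] by blast
qed

end
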